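(* Let $F$ be any channel with input alphabet $\{0,1\}$ and finite output alphabet. Then there exists a channel $D$ with input and output alphabet $\{0,1\}$ such that $\eta_{TV}(D)=\eta_{TV}(F)$ and $$\mathrm{BEC}(\alpha(F))\succeq_{\mathrm{deg}}F\succeq_{\mathrm{deg}}D,$$ where $\alpha(F)=1-\eta_{TV}(F)$.
   Context: $TV(P,Q)=\frac12\sum_y|P(y)-Q(y)|$. Dobrushin coefficient $\eta_{TV}(P)=\sup_{P_X\ne Q_X}\frac{TV(P\circ P_X,P\circ Q_X)}{TV(P_X,Q_X)}$, $P\circ P_X$ the output distribution. Doeblin coefficient $\alpha(P)=\sum_y\min_xP_{Y|X}(y|x)$. $\mathrm{BEC}(\varepsilon)$: binary erasure channel with input $\{0,1\}$, output $\{0,e,1\}$, input $x$ mapped to $x$ with probability $1-\varepsilon$ and to $e$ with probability $\varepsilon$. $P_{Y|X}\succeq_{\mathrm{deg}}Q_{Y'|X}$ means $Q_{Y'|X}=D_{Y'|Y}\circ P_{Y|X}$ for some channel $D_{Y'|Y}$. *)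

theory Defs
  imports Complex_Main
begin

text \<open>A channel P_{Y|X} is represented as a function P x y = P_{Y|X}(y|x).\<close>

definition is_dist :: "('a::finite \<Rightarrow> real) \<Rightarrow> bool" where
  "is_dist p \<longleftrightarrow> (\<forall>a. p a \<ge> 0) \<and> (\<Sum>a\<in>UNIV. p a) = 1"

definition is_channel :: "('x \<Rightarrow> 'y::finite \<Rightarrow> real) \<Rightarrow> bool" where
  "is_channel P \<longleftrightarrow> (\<forall>x. is_dist (P x))"

definition TV :: "('y::finite \<Rightarrow> real) \<Rightarrow> ('y \<Rightarrow> real) \<Rightarrow> real" where
  "TV p q = (1/2) * (\<Sum>y\<in>UNIV. \<bar>p y - q y\<bar>)"

definition out_dist :: "('x::finite \<Rightarrow> 'y \<Rightarrow> real) \<Rightarrow> ('x \<Rightarrow> real) \<Rightarrow> 'y \<Rightarrow> real" where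
  "out_dist P px y = (\<Sum>x\<in>UNIV. px x * P x y)"

definition eta_TV :: "('x::finite \<Rightarrow> 'y::finite \<Rightarrow> real) \<Rightarrow> real" where
  "eta_TV P = Sup {TV (out_dist P px) (out_dist P qx) / TV px qx | px qx.
                   is_dist px \<and> is_dist qx \<and> px \<noteq> qx}"

definition doeblin :: "('x::finite \<Rightarrow> 'y::finite \<Rightarrow> real) \<Rightarrow> real" where
  "doeblin P = (\<Sum>y\<in>UNIV. Min (range (\<lambda>x. P x y)))"

text \<open>Binary erasure channel: output alphabet bool option, None is the erasure symbol e.\<close>
definition BEC :: "real \<Rightarrow> bool \<Rightarrow> bool option \<Rightarrow> real" where
  "BEC \<epsilon> x y = (case y of None \<Rightarrow> \<epsilon> | Some b \<Rightarrow> (if b = x then 1 - \<epsilon> else 0))"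

definition degraded :: "('x \<Rightarrow> 'y::finite \<Rightarrow> real) \<Rightarrow> ('x \<Rightarrow> 'z::finite \<Rightarrow> real) \<Rightarrow> bool" where
  "degraded P Q \<longleftrightarrow> (\<exists>D :: 'y \<Rightarrow> 'z \<Rightarrow> real. is_channel D \<and>
      (\<forall>x z. Q x z = (\<Sum>y\<in>UNIV. P x y * D y z)))"

end

theory Submission
  imports Defs
begin

text \<open>For a binary-input channel F with rows p = F 1 and q = F 0, both quantities
are determined by the pair (p, q): eta_TV F = TV p q because every input difference is a
multiple of the difference of two point masses, and doeblin F = \<Sum>min(p,q) = 1 - TV p q.
Splitting each row as the common part min(p,q), of mass \<alpha>, plus a remainder of mass
1 - \<alpha> exhibits F as the erasure channel BEC(\<alpha>) followed by a channel that sends the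
erasure to the normalised common part and the bit b to the normalised remainder of F b.
Conversely, quantising the output of F to the indicator of the set {p \<ge> q} gives a
binary channel D whose two rows differ on 1 by p{p \<ge> q} - q{p \<ge> q} = TV p q.\<close>

lemma sum_UNIV_bool: "(\<Sum>b\<in>(UNIV::bool set). f b) = f True + f False"
  by (simp add: UNIV_bool add.commute)

lemma sum_UNIV_option_bool:
  "(\<Sum>w\<in>(UNIV::bool option set). f w) = f None + f (Some True) + f (Some False)"
proof -
  have U: "(UNIV::bool option set) = {None, Some True, Some False}"
    using UNIV_option_conv UNIV_bool by auto
  show ?thesis unfolding U by (simp add: algebra_simps)
qed

lemma min_range_bool: "Min (range (f :: bool \<Rightarrow> 'a::linorder)) = min (f True) (f False)"
proof -
  have "range f = {f True, f False}" using UNIV_bool by auto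
  then show ?thesis by (simp add: min.commute)
qed

lemma is_dist_bool_False:
  assumes "is_dist (p :: bool \<Rightarrow> real)"
  shows "p False = 1 - p True"
  using assms unfolding is_dist_def by (simp add: sum_UNIV_bool)

lemma TV_bool:
  assumes "is_dist (p :: bool \<Rightarrow> real)" and "is_dist q"
  shows "TV p q = \<bar>p True - q True\<bar>"
  using is_dist_bool_False[OF assms(1)] is_dist_bool_False[OF assms(2)]
  unfolding TV_def by (simp add: sum_UNIV_bool abs_minus_commute)

lemma TV_eq_1_minus_sum_min:
  assumes "is_dist p" and "is_dist q"
  shows "TV p q = 1 - (\<Sum>y\<in>UNIV. min (p y) (q y))"
proof -
  have "\<And>y. \<bar>p y - q y\<bar> = p y + q y - 2 * min (p y) (q y)"
    by (simp add: min_def abs_if)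
  then show ?thesis
    using assms unfolding TV_def is_dist_def
    by (simp add: sum_subtractf sum.distrib sum_distrib_left[symmetric])
qed

lemma TV_eq_sum_positive_part:
  assumes "is_dist p" and "is_dist q"
  shows "TV p q = (\<Sum>y\<in>UNIV. max 0 (p y - q y))"
proof -
  have "\<And>y. max 0 (p y - q y) = p y - min (p y) (q y)" by (simp add: max_def min_def)
  then show ?thesis
    using assms TV_eq_1_minus_sum_min unfolding is_dist_def by (simp add: sum_subtractf)
qed

text \<open>The fallback d only matters when f vanishes, where any distribution will do.\<close>

definition normalize_dist :: "('a::finite \<Rightarrow> real) \<Rightarrow> ('a \<Rightarrow> real) \<Rightarrow> 'a \<Rightarrow> real" where
  "normalize_dist f d = (if sum f UNIV = 0 then d else (\<lambda>a. f a / sum f UNIV))"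

lemma is_dist_normalize_dist:
  assumes "\<And>a. f a \<ge> 0" and "is_dist d"
  shows "is_dist (normalize_dist f d)"
proof -
  have "sum f UNIV \<ge> 0" using assms(1) by (simp add: sum_nonneg)
  then show ?thesis
    using assms unfolding is_dist_def normalize_dist_def
    by (auto simp: sum_divide_distrib[symmetric])
qed

lemma sum_mult_normalize_dist:
  assumes "\<And>a. f a \<ge> 0"
  shows "sum f UNIV * normalize_dist f d a = f a"
  using assms sum_nonneg_eq_0_iff[of UNIV f] unfolding normalize_dist_def by auto

lemma eta_TV_bool:
  fixes P :: "bool \<Rightarrow> 'y::finite \<Rightarrow> real"
  shows "eta_TV P = TV (P True) (P False)"
proof -
  let ?ratio = "\<lambda>px qx. TV (out_dist P px) (out_dist P qx) / TV px qx"
  have ratio: "?ratio px qx = TV (P True) (P False)"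
    if "is_dist px" "is_dist qx" "px \<noteq> qx" for px qx
  proof -
    have "px True \<noteq> qx True"
      using that is_dist_bool_False by (metis (full_types) ext)
    moreover have "\<And>y. out_dist P px y - out_dist P qx y
        = (px True - qx True) * (P True y - P False y)"
      unfolding out_dist_def sum_UNIV_bool is_dist_bool_False[OF that(1)]
        is_dist_bool_False[OF that(2)] by (simp add: algebra_simps)
    then have "TV (out_dist P px) (out_dist P qx) = \<bar>px True - qx True\<bar> * TV (P True) (P False)"
      unfolding TV_def by (simp add: abs_mult sum_distrib_left)
    ultimately show ?thesis using TV_bool[OF that(1,2)] by simp
  qed
  define \<delta> :: "bool \<Rightarrow> bool \<Rightarrow> real" where "\<delta> b = (\<lambda>c. if c = b then 1 else 0)" for b
  have point_masses: "is_dist (\<delta> True)" "is_dist (\<delta> False)" "\<delta> True \<noteq> \<delta> False"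
    unfolding is_dist_def \<delta>_def by (auto simp: sum_UNIV_bool fun_eq_iff)
  have "{?ratio px qx | px qx. is_dist px \<and> is_dist qx \<and> px \<noteq> qx} = {TV (P True) (P False)}"
  proof (intro set_eqI iffI)
    fix t assume "t \<in> {?ratio px qx | px qx. is_dist px \<and> is_dist qx \<and> px \<noteq> qx}"
    then show "t \<in> {TV (P True) (P False)}" using ratio by auto
  next
    fix t assume "t \<in> {TV (P True) (P False)}"
    then show "t \<in> {?ratio px qx | px qx. is_dist px \<and> is_dist qx \<and> px \<noteq> qx}"
      using ratio[OF point_masses] point_masses by force
  qed
  then show ?thesis unfolding eta_TV_def by simp
qed

lemma doeblin_bool:
  fixes P :: "bool \<Rightarrow> 'y::finite \<Rightarrow> real"
  shows "doeblin P = (\<Sum>y\<in>UNIV. min (P True y) (P False y))"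
  unfolding doeblin_def by (simp add: min_range_bool)

lemma doeblin_eq_1_minus_eta_TV:
  fixes P :: "bool \<Rightarrow> 'y::finite \<Rightarrow> real"
  assumes "is_channel P"
  shows "doeblin P = 1 - eta_TV P"
  using assms unfolding doeblin_bool eta_TV_bool is_channel_def
  by (simp add: TV_eq_1_minus_sum_min)

lemma degraded_BEC_doeblin:
  fixes F :: "bool \<Rightarrow> 'y::finite \<Rightarrow> real"
  assumes F: "is_channel F"
  shows "degraded (BEC (doeblin F)) F"
proof -
  define m where "m y = min (F True y) (F False y)" for y
  define r where "r b y = F b y - m y" for b y
  have dist: "is_dist (F b)" for b using F unfolding is_channel_def by simp
  have m_nonneg: "m y \<ge> 0" for y using dist unfolding m_def is_dist_def by simp
  have r_nonneg: "r b y \<ge> 0" for b y unfolding r_def m_def by (cases b) auto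
  have sum_r: "sum (r b) UNIV = 1 - sum m UNIV" for b
    using dist unfolding r_def is_dist_def by (simp add: sum_subtractf)
  define G where "G w = (case w of None \<Rightarrow> normalize_dist m (F True)
      | Some b \<Rightarrow> normalize_dist (r b) (F True))" for w
  have "is_channel G"
    unfolding is_channel_def G_def
    by (simp add: is_dist_normalize_dist m_nonneg r_nonneg dist split: option.split)
  moreover have "F x z = (\<Sum>w\<in>UNIV. BEC (sum m UNIV) x w * G w z)" for x z
  proof -
    have "F x z = m z + r x z" by (simp add: r_def)
    also have "\<dots> = sum m UNIV * normalize_dist m (F True) z
        + sum (r x) UNIV * normalize_dist (r x) (F True) z"
      by (simp add: sum_mult_normalize_dist m_nonneg r_nonneg)
    finally show ?thesis
      unfolding sum_UNIV_option_bool BEC_def G_def sum_r by (cases x) auto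
  qed
  ultimately show ?thesis
    unfolding degraded_def doeblin_bool m_def by blast
qed

lemma is_channel_compose:
  assumes "is_channel P" and "is_channel K"
  shows "is_channel (\<lambda>x z. \<Sum>y\<in>UNIV. P x y * K y z)"
proof -
  have "(\<Sum>z\<in>UNIV. \<Sum>y\<in>UNIV. P x y * K y z) = 1" for x
    using assms unfolding is_channel_def is_dist_def
    by (simp add: sum.swap[of _ UNIV UNIV] sum_distrib_left[symmetric])
  then show ?thesis
    using assms unfolding is_channel_def is_dist_def by (simp add: sum_nonneg)
qed

lemma ex_binary_degraded_same_eta_TV:
  fixes F :: "bool \<Rightarrow> 'y::finite \<Rightarrow> real"
  assumes F: "is_channel F"
  shows "\<exists>D :: bool \<Rightarrow> bool \<Rightarrow> real. is_channel D \<and> eta_TV D = eta_TV F \<and> degraded F D"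
proof -
  define H :: "'y \<Rightarrow> bool \<Rightarrow> real"
    where "H y z = (if (F False y \<le> F True y) = z then 1 else 0)" for y z
  define D where "D x z = (\<Sum>y\<in>UNIV. F x y * H y z)" for x z
  have "is_channel H" unfolding is_channel_def is_dist_def H_def by (simp add: sum_UNIV_bool)
  then have D: "is_channel D" unfolding D_def using is_channel_compose[OF F] by blast
  have "eta_TV D = \<bar>D True True - D False True\<bar>"
    using D unfolding eta_TV_bool is_channel_def by (simp add: TV_bool)
  also have "D True True - D False True = (\<Sum>y\<in>UNIV. max 0 (F True y - F False y))"
    unfolding D_def sum_subtractf[symmetric] by (rule sum.cong) (auto simp: H_def algebra_simps)
  also have "\<bar>\<dots>\<bar> = TV (F True) (F False)"
    using F unfolding is_channel_def by (simp add: sum_nonneg TV_eq_sum_positive_part)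
  finally have "eta_TV D = eta_TV F" by (simp add: eta_TV_bool)
  moreover have "degraded F D"
    unfolding degraded_def D_def using \<open>is_channel H\<close> by blast
  ultimately show ?thesis using D by blast
qed

theorem mainTheorem8:
  fixes F :: "bool \<Rightarrow> 'y::finite \<Rightarrow> real"
  assumes "is_channel F"
  shows "doeblin F = 1 - eta_TV F \<and>
    (\<exists>D :: bool \<Rightarrow> bool \<Rightarrow> real. is_channel D \<and> eta_TV D = eta_TV F \<and>
       degraded (BEC (doeblin F)) F \<and> degraded F D)"
  using doeblin_eq_1_minus_eta_TV[OF assms] degraded_BEC_doeblin[OF assms]
    ex_binary_degraded_same_eta_TV[OF assms]
  by blast

end
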